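(* Let $\varepsilon>0$, $\alpha$ an ordinal, and $h\in d_\varepsilon^\alpha(B_{\ell_1([0,\omega])})$. Then for every $m\in\mathbb N$, $\tau_m h\in d_\varepsilon^\alpha(B_{\ell_1([0,\omega])})$, where $\tau_m:\ell_1([0,\omega])\to\ell_1([0,\omega])$ is defined by $\tau_m h(n)=h(n-m)$ for $m\le n<\omega$, $\tau_m h(n)=0$ for $n<m$, and $\tau_m h(\omega)=h(\omega)$.
   Context: $[0,\omega]=\{0,1,2,\dots\}\cup\{\omega\}$ with the order topology (a convergent sequence with its limit), and $\ell_1([0,\omega])$ is identified with the dual of $C([0,\omega])$, carrying the corresponding weak$^*$-topology. For a weak$^*$-compact $K\subset X^*$: for $x\in X,t\in\mathbb R$, $H(x,t)=\{x^*: x^*(x)>t\}$; a weak$^*$-slice of $K$ is a nonempty $H(x,t)\cap K$; $d_\varepsilon K$ is $K$ minus the union of all weak$^*$-slices of $K$ of norm diameter $<\varepsilon$; $d_\varepsilon^0K=K$, $d_\varepsilon^{\beta+1}K=d_\varepsilon(d_\varepsilon^\beta K)$, $d_\varepsilon^\beta K=\bigcap_{\mu<\beta}d_\varepsilon^\mu K$ for limit $\beta$. *)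

theory Defs
  imports Complex_Main
begin

text \<open>Points of [0,omega]: Some n is n, None is omega.
  Elements of l1([0,omega]) are functions nat option => real with absolutely
  summable finite part.\<close>

definition is_l1 :: "(nat option \<Rightarrow> real) \<Rightarrow> bool" where
  "is_l1 h \<longleftrightarrow> summable (\<lambda>n. \<bar>h (Some n)\<bar>)"

definition l1norm :: "(nat option \<Rightarrow> real) \<Rightarrow> real" where
  "l1norm h = (\<Sum>n. \<bar>h (Some n)\<bar>) + \<bar>h None\<bar>"

definition l1ball :: "(nat option \<Rightarrow> real) set" where
  "l1ball = {h. is_l1 h \<and> l1norm h \<le> 1}"

text \<open>C([0,omega]): continuous functions on the convergent sequence with its limit.\<close>
definition Cw :: "(nat option \<Rightarrow> real) set" where
  "Cw = {x. (\<lambda>n. x (Some n)) \<longlonglongrightarrow> x None}"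

definition pairing :: "(nat option \<Rightarrow> real) \<Rightarrow> (nat option \<Rightarrow> real) \<Rightarrow> real" where
  "pairing h x = (\<Sum>n. h (Some n) * x (Some n)) + h None * x None"

definition wslice :: "(nat option \<Rightarrow> real) set \<Rightarrow> (nat option \<Rightarrow> real) set \<Rightarrow> bool" where
  "wslice K S \<longleftrightarrow> S \<noteq> {} \<and> (\<exists>x\<in>Cw. \<exists>t::real. S = {h \<in> K. pairing h x > t})"

definition diam_less :: "(nat option \<Rightarrow> real) set \<Rightarrow> real \<Rightarrow> bool" where
  "diam_less S eps \<longleftrightarrow> (\<exists>\<delta><eps. \<forall>f\<in>S. \<forall>g\<in>S. l1norm (\<lambda>i. f i - g i) \<le> \<delta>)"

definition dder :: "real \<Rightarrow> (nat option \<Rightarrow> real) set \<Rightarrow> (nat option \<Rightarrow> real) set" where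
  "dder eps K = K - \<Union>{S. wslice K S \<and> diam_less S eps}"

text \<open>Transfinite iterates, indexed by elements of an arbitrary well-ordered type
  (each element standing for the ordinal of its initial segment).\<close>
definition is_succ_of :: "'o::wellorder \<Rightarrow> 'o \<Rightarrow> bool" where
  "is_succ_of b m \<longleftrightarrow> m < b \<and> (\<forall>v. \<not> (m < v \<and> v < b))"

definition dder_iter :: "real \<Rightarrow> (nat option \<Rightarrow> real) set \<Rightarrow> 'o::wellorder \<Rightarrow> (nat option \<Rightarrow> real) set" where
  "dder_iter eps K = wfrec {(x, y). x < y}
     (\<lambda>D b. if (\<forall>m. \<not> m < b) then K
            else if (\<exists>m. is_succ_of b m) then dder eps (D (THE m. is_succ_of b m))
            else \<Inter>{D m | m. m < b})"

definition tau :: "nat \<Rightarrow> (nat option \<Rightarrow> real) \<Rightarrow> (nat option \<Rightarrow> real)" where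
  "tau m h = (\<lambda>i. case i of None \<Rightarrow> h None
                 | Some n \<Rightarrow> if m \<le> n then h (Some (n - m)) else 0)"

end

theory Submission
  imports Defs
begin

text \<open>
  The shift tau m is an isometry of l1([0,omega]) onto its image, maps the unit
  ball into itself, and is weak*-continuous: it is the adjoint of the operator
  shift_left m x (n) = x (n + m), x(omega) = x(omega), which maps C([0,omega]) into itself.
  Hence if a subset D of the unit ball is tau-invariant, so is its derivation dder eps D:
  a small weak*-slice S of D containing tau m h pulls back, via the adjoint, to a weak*-slice
  of D containing h whose diameter is at most that of S.
\<close>

lemma is_succ_of_unique:
  fixes b :: "'o::wellorder"
  assumes "is_succ_of b m1" "is_succ_of b m2"
  shows "m1 = m2"
  using assms unfolding is_succ_of_def by (metis not_less_iff_gr_or_eq)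

lemma dder_iter_unfold:
  fixes b :: "'o::wellorder"
  shows "dder_iter eps K b = (if \<forall>m. \<not> m < b then K
            else if \<exists>m. is_succ_of b m then dder eps (dder_iter eps K (THE m. is_succ_of b m))
            else \<Inter>{dder_iter eps K m | m. m < b})"
proof -
  have recursion: "dder_iter eps K b = (\<lambda>D b. if \<forall>m. \<not> m < b then K
            else if \<exists>m. is_succ_of b m then dder eps (D (THE m. is_succ_of b m))
            else \<Inter>{D m | m. m < b}) (cut (dder_iter eps K) {(x, y). x < y} b) b"
    unfolding dder_iter_def by (rule wfrec[OF wellorder_class.wf])
  have cut_eq: "cut (dder_iter eps K) {(x, y). x < y} b m = dder_iter eps K m" if "m < b" for m
    using that by (simp add: cut_apply)
  then have cut_set: "{cut (dder_iter eps K) {(x, y). x < y} b m | m. m < b}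
      = {dder_iter eps K m | m. m < b}"
    by blast
  show ?thesis
  proof (cases "\<exists>m. is_succ_of b m")
    case True
    then obtain m where "is_succ_of b m" by blast
    then have "(THE m. is_succ_of b m) = m" using is_succ_of_unique by blast
    moreover have "m < b" using \<open>is_succ_of b m\<close> unfolding is_succ_of_def by simp
    ultimately show ?thesis using True by (subst recursion) (simp add: cut_eq)
  next
    case False
    then show ?thesis by (subst recursion) (simp only: cut_set if_False)
  qed
qed

lemma dder_iter_least:
  fixes b :: "'o::wellorder"
  assumes "\<forall>m. \<not> m < b"
  shows "dder_iter eps K b = K"
  using assms by (subst dder_iter_unfold) simp

lemma dder_iter_succ:
  fixes b :: "'o::wellorder"
  assumes "is_succ_of b m"
  shows "dder_iter eps K b = dder eps (dder_iter eps K m)"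
proof -
  have "(THE m. is_succ_of b m) = m" using assms is_succ_of_unique by blast
  moreover have "\<not> (\<forall>m. \<not> m < b)" using assms unfolding is_succ_of_def by blast
  ultimately show ?thesis using assms by (subst dder_iter_unfold) auto
qed

lemma dder_iter_limit:
  fixes b :: "'o::wellorder"
  assumes "\<exists>m. m < b" and "\<nexists>m. is_succ_of b m"
  shows "dder_iter eps K b = \<Inter>{dder_iter eps K m | m. m < b}"
  using assms by (subst dder_iter_unfold) auto

lemma dder_iter_induct:
  fixes b :: "'o::wellorder"
  assumes "P K"
    and "\<And>m :: 'o. P (dder_iter eps K m) \<Longrightarrow> P (dder eps (dder_iter eps K m))"
    and "\<And>\<F>. \<F> \<noteq> {} \<Longrightarrow> \<forall>D\<in>\<F>. P D \<Longrightarrow> P (\<Inter>\<F>)"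
  shows "P (dder_iter eps K b)"
proof (induction b rule: less_induct)
  case (less b)
  consider "\<forall>m. \<not> m < b" | m where "is_succ_of b m"
    | "\<exists>m. m < b" "\<nexists>m. is_succ_of b m" by blast
  then show ?case
  proof cases
    case 1
    then show ?thesis using assms(1) by (simp add: dder_iter_least)
  next
    case (2 m)
    then have "P (dder_iter eps K m)" using 2 less unfolding is_succ_of_def by blast
    then show ?thesis unfolding dder_iter_succ[OF 2] by (rule assms(2))
  next
    case 3
    then show ?thesis using less assms(3)[of "{dder_iter eps K m | m. m < b}"]
      by (auto simp: dder_iter_limit)
  qed
qed

lemma dder_subset: "dder eps D \<subseteq> D"
  unfolding dder_def by blast

lemma dder_iter_invariant:
  fixes b :: "'o::wellorder"
  assumes "T ` K \<subseteq> K"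
    and "\<And>D. D \<subseteq> K \<Longrightarrow> T ` D \<subseteq> D \<Longrightarrow> T ` dder eps D \<subseteq> dder eps D"
  shows "T ` dder_iter eps K b \<subseteq> dder_iter eps K b"
proof -
  have "dder_iter eps K b \<subseteq> K \<and> T ` dder_iter eps K b \<subseteq> dder_iter eps K b"
  proof (rule dder_iter_induct)
    fix D assume "D \<subseteq> K \<and> T ` D \<subseteq> D"
    then show "dder eps D \<subseteq> K \<and> T ` dder eps D \<subseteq> dder eps D"
      using assms(2)[of D] dder_subset[of eps D] by auto
  next
    fix \<F> assume "\<F> \<noteq> {}" and invariant: "\<forall>D\<in>\<F>. D \<subseteq> K \<and> T ` D \<subseteq> D"
    then obtain D0 where "D0 \<in> \<F>" by blast
    then have "\<Inter>\<F> \<subseteq> K" using invariant by blast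
    moreover have "T ` \<Inter>\<F> \<subseteq> \<Inter>\<F>" using invariant by blast
    ultimately show "\<Inter>\<F> \<subseteq> K \<and> T ` \<Inter>\<F> \<subseteq> \<Inter>\<F>" ..
  qed (use assms(1) in simp)
  then show ?thesis by simp
qed

text \<open>If T maps D into D, is the adjoint of a map A of C([0,omega]) into itself, and does not
  decrease distances, then every small slice containing T h pulls back to a small slice
  containing h; hence T maps the derived set into itself.\<close>
lemma dder_invariant:
  assumes TD: "T ` D \<subseteq> D"
    and A_Cw: "\<And>x. x \<in> Cw \<Longrightarrow> A x \<in> Cw"
    and adjoint: "\<And>g x. g \<in> D \<Longrightarrow> x \<in> Cw \<Longrightarrow> pairing (T g) x = pairing g (A x)"
    and expanding: "\<And>f g. f \<in> D \<Longrightarrow> g \<in> D \<Longrightarrow>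
                       l1norm (\<lambda>i. f i - g i) \<le> l1norm (\<lambda>i. T f i - T g i)"
  shows "T ` dder eps D \<subseteq> dder eps D"
proof
  fix y assume "y \<in> T ` dder eps D"
  then obtain h where h: "h \<in> dder eps D" and y: "y = T h" by blast
  then have hD: "h \<in> D" and h_not_small: "\<And>S. wslice D S \<Longrightarrow> diam_less S eps \<Longrightarrow> h \<notin> S"
    unfolding dder_def by auto
  show "y \<in> dder eps D"
  proof (rule ccontr)
    assume "y \<notin> dder eps D"
    then obtain S where S: "wslice D S" "diam_less S eps" "T h \<in> S"
      using TD hD y unfolding dder_def by auto
    then obtain x t where x: "x \<in> Cw" and S_eq: "S = {g \<in> D. pairing g x > t}"
      unfolding wslice_def by blast
    obtain \<delta> where "\<delta> < eps" and diam_S: "\<forall>f\<in>S. \<forall>g\<in>S. l1norm (\<lambda>i. f i - g i) \<le> \<delta>"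
      using S(2) unfolding diam_less_def by blast
    define S' where "S' = {g \<in> D. pairing g (A x) > t}"
    have T_S': "T g \<in> S" if "g \<in> S'" for g
      using that TD adjoint[OF _ x] unfolding S'_def S_eq by auto
    have "h \<in> S'" using S(3) hD adjoint[OF hD x] unfolding S'_def S_eq by auto
    moreover have "wslice D S'"
      using \<open>h \<in> S'\<close> A_Cw[OF x] unfolding wslice_def S'_def by blast
    moreover have "diam_less S' eps"
      unfolding diam_less_def
    proof (intro exI conjI ballI)
      fix f g assume "f \<in> S'" "g \<in> S'"
      then have "l1norm (\<lambda>i. f i - g i) \<le> l1norm (\<lambda>i. T f i - T g i)"
        using expanding unfolding S'_def by blast
      also have "\<dots> \<le> \<delta>" using diam_S T_S' \<open>f \<in> S'\<close> \<open>g \<in> S'\<close> by blast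
      finally show "l1norm (\<lambda>i. f i - g i) \<le> \<delta>" .
    qed (fact \<open>\<delta> < eps\<close>)
    ultimately show False using h_not_small by blast
  qed
qed

lemma shift_right_sums:
  fixes c :: "nat \<Rightarrow> real"
  assumes "summable c"
  shows "summable (\<lambda>n. if m \<le> n then c (n - m) else 0)"
    and "(\<Sum>n. if m \<le> n then c (n - m) else 0) = (\<Sum>k. c k)"
proof -
  let ?a = "\<lambda>n. if m \<le> n then c (n - m) else 0"
  have shifted: "(\<lambda>n. ?a (n + m)) = c" by auto
  show summ: "summable ?a" using assms shifted summable_iff_shift[of ?a m] by simp
  have "suminf ?a = (\<Sum>n. ?a (n + m)) + (\<Sum>i<m. ?a i)"
    by (rule suminf_split_initial_segment[OF summ])
  then show "suminf ?a = suminf c" using shifted by simp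
qed

lemma tau_Some: "tau m f (Some n) = (if m \<le> n then f (Some (n - m)) else 0)"
  by (simp add: tau_def)

lemma tau_None: "tau m f None = f None"
  by (simp add: tau_def)

lemma abs_tau_Some:
  "(\<lambda>n. \<bar>tau m f (Some n)\<bar>) = (\<lambda>n. if m \<le> n then \<bar>f (Some (n - m))\<bar> else 0)"
  by (auto simp: tau_Some)

lemma is_l1_tau: "is_l1 f \<Longrightarrow> is_l1 (tau m f)"
  unfolding is_l1_def abs_tau_Some by (rule shift_right_sums(1))

lemma l1norm_tau: "is_l1 f \<Longrightarrow> l1norm (tau m f) = l1norm f"
  unfolding l1norm_def abs_tau_Some tau_None is_l1_def
  by (simp add: shift_right_sums(2)[of "\<lambda>k. \<bar>f (Some k)\<bar>"])

lemma tau_l1ball: "h \<in> l1ball \<Longrightarrow> tau m h \<in> l1ball"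
  unfolding l1ball_def using is_l1_tau l1norm_tau by auto

lemma tau_diff: "(\<lambda>i. tau m f i - tau m g i) = tau m (\<lambda>i. f i - g i)"
  by (auto simp: tau_def split: option.split)

lemma is_l1_diff:
  assumes "is_l1 f" "is_l1 g"
  shows "is_l1 (\<lambda>i. f i - g i)"
proof -
  have "summable (\<lambda>n. \<bar>f (Some n)\<bar> + \<bar>g (Some n)\<bar>)"
    using assms unfolding is_l1_def by (rule summable_add)
  then show ?thesis
    unfolding is_l1_def by (rule summable_comparison_test[rotated]) auto
qed

lemma l1norm_tau_diff:
  "is_l1 f \<Longrightarrow> is_l1 g \<Longrightarrow> l1norm (\<lambda>i. tau m f i - tau m g i) = l1norm (\<lambda>i. f i - g i)"
  unfolding tau_diff by (rule l1norm_tau[OF is_l1_diff])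

text \<open>The predual operator of tau m on C([0,omega]).\<close>
definition shift_left :: "nat \<Rightarrow> (nat option \<Rightarrow> real) \<Rightarrow> (nat option \<Rightarrow> real)" where
  "shift_left m x = (\<lambda>i. case i of None \<Rightarrow> x None | Some n \<Rightarrow> x (Some (n + m)))"

lemma shift_left_Cw: "x \<in> Cw \<Longrightarrow> shift_left m x \<in> Cw"
  unfolding Cw_def shift_left_def using LIMSEQ_ignore_initial_segment by auto

lemma pairing_tau:
  assumes g: "is_l1 g" and x: "x \<in> Cw"
  shows "pairing (tau m g) x = pairing g (shift_left m x)"
proof -
  have "Bseq (\<lambda>n. x (Some n))"
    using x unfolding Cw_def by (blast intro: convergent_imp_Bseq convergentI)
  then obtain B where B: "\<And>n. \<bar>x (Some n)\<bar> \<le> B" unfolding Bseq_def by auto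
  let ?c = "\<lambda>k. g (Some k) * x (Some (k + m))"
  have "summable (\<lambda>k. \<bar>g (Some k)\<bar> * B)" using g unfolding is_l1_def by (rule summable_mult2)
  then have summ: "summable ?c"
    by (rule summable_comparison_test[rotated])
       (use B in \<open>auto simp: abs_mult intro!: mult_left_mono\<close>)
  have shifted: "(\<lambda>n. tau m g (Some n) * x (Some n)) = (\<lambda>n. if m \<le> n then ?c (n - m) else 0)"
    by (auto simp: tau_Some)
  show ?thesis
    unfolding pairing_def shifted shift_right_sums(2)[OF summ] by (simp add: shift_left_def tau_None)
qed

lemma tau_dder_invariant:
  assumes D: "D \<subseteq> l1ball" and tau_D: "tau m ` D \<subseteq> D"
  shows "tau m ` dder eps D \<subseteq> dder eps D"
proof (rule dder_invariant[OF tau_D shift_left_Cw])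
  have l1: "is_l1 g" if "g \<in> D" for g
    using that D unfolding l1ball_def by auto
  fix f g x
  show "pairing (tau m g) x = pairing g (shift_left m x)" if "g \<in> D" "x \<in> Cw"
    using that l1 pairing_tau by blast
  show "l1norm (\<lambda>i. f i - g i) \<le> l1norm (\<lambda>i. tau m f i - tau m g i)" if "f \<in> D" "g \<in> D"
    using that l1 l1norm_tau_diff by simp
qed

theorem mainTheorem6:
  fixes eps :: real and alpha :: "'o::wellorder" and h :: "nat option \<Rightarrow> real"
  assumes "eps > 0"
    and "h \<in> dder_iter eps l1ball alpha"
  shows "\<forall>m::nat. tau m h \<in> dder_iter eps l1ball alpha"
proof
  fix m :: nat
  have "tau m ` l1ball \<subseteq> l1ball" using tau_l1ball by blast
  then have "tau m ` dder_iter eps l1ball alpha \<subseteq> dder_iter eps l1ball alpha"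
    using tau_dder_invariant by (rule dder_iter_invariant)
  then show "tau m h \<in> dder_iter eps l1ball alpha" using assms(2) by blast
qed

end
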